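(* There exists a radial weight $\omega\notin\widehat{\mathcal{D}}$ such that $\widetilde{\omega}$ is a radial weight and $\widetilde{\omega}\in\widehat{\mathcal{D}}$.
   Context: A radial weight is a non-negative $\omega\in L^1([0,1))$, extended to the unit disc by $\omega(z)=\omega(|z|)$, with $\widehat{\omega}(r)=\int_r^1\omega(s)\,ds>0$ for all $0\le r<1$. $\widetilde{\omega}(r)=\frac{\widehat{\omega}(r)}{1-r}$ for $0\le r<1$. A radial weight $\nu$ belongs to $\widehat{\mathcal{D}}$ if there is $C=C(\nu)\ge1$ with $\widehat{\nu}(r)\le C\,\widehat{\nu}\big(\frac{1+r}{2}\big)$ for all $0\le r<1$, where $\widehat\nu(r)=\int_r^1\nu(s)\,ds$. *)

theory Defs
  imports "HOL-Analysis.Analysis"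
begin

text \<open>A radial weight is represented by its radial profile on [0,1).
  omega_hat r = integral of omega over [r,1).\<close>

definition omega_hat :: "(real \<Rightarrow> real) \<Rightarrow> real \<Rightarrow> real" where
  "omega_hat \<omega> r = (LINT s:{r..<1}|lborel. \<omega> s)"

definition radial_weight :: "(real \<Rightarrow> real) \<Rightarrow> bool" where
  "radial_weight \<omega> \<longleftrightarrow>
     (\<forall>r\<in>{0..<1}. 0 \<le> \<omega> r) \<and>
     set_integrable lborel {0..<1} \<omega> \<and>
     (\<forall>r\<in>{0..<1}. omega_hat \<omega> r > 0)"

definition omega_tilde :: "(real \<Rightarrow> real) \<Rightarrow> real \<Rightarrow> real" where
  "omega_tilde \<omega> r = omega_hat \<omega> r / (1 - r)"

definition D_hat :: "(real \<Rightarrow> real) set" where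
  "D_hat = {\<nu>. radial_weight \<nu> \<and>
     (\<exists>C\<ge>1. \<forall>r\<in>{0..<1}. omega_hat \<nu> r \<le> C * omega_hat \<nu> ((1 + r) / 2))}"

end

theory Submission
  imports Defs
begin

text \<open>
  Put the mass \<open>2^-k\<^sup>2 - 2^-(k+1)\<^sup>2\<close> uniformly on \<open>[1 - 2^-m\<^sub>k, 1 - 2^-(m\<^sub>k+1))\<close> with
  \<open>m\<^sub>k = 4^(k+1)\<close>. Then \<open>\<omega>\<^sup>^\<close> drops from \<open>2^-k\<^sup>2\<close> to \<open>2^-(k+1)\<^sup>2\<close> across the
  \<open>k\<close>-th piece, which halves the distance to 1, so \<open>\<omega> \<notin> D\<^sup>^\<close>. On the other hand
  \<open>\<omega>\<^sup>^\<close> is constant \<open>2^-(k+1)\<^sup>2\<close> between consecutive pieces, a stretch of logarithmic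
  length about \<open>3 m\<^sub>k ln 2 \<ge> 2^(2k+1) ln 2\<close>. Integrating \<open>\<omega>\<^sup>~ = \<omega>\<^sup>^/(1-s)\<close> over
  \<open>[r,(1+r)/2)\<close> gives at most \<open>\<omega>\<^sup>^(r) ln 2\<close>, whereas the plateau following the
  first piece ending after \<open>r\<close> already contributes at least as much to the integral over
  \<open>[(1+r)/2,1)\<close>; hence \<open>\<omega>\<^sup>~ \<in> D\<^sup>^\<close> with constant 2.
\<close>

lemma set_integral_nonneg_real:
  fixes f :: "'a \<Rightarrow> real"
  assumes "\<And>x. x \<in> A \<Longrightarrow> 0 \<le> f x"
  shows "0 \<le> (LINT x:A|M. f x)"
  unfolding set_lebesgue_integral_def
  by (rule integral_nonneg_AE, rule AE_I2) (auto simp: indicator_def assms)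

lemma set_integral_atLeastLessThan_split:
  fixes f :: "real \<Rightarrow> real"
  assumes "set_integrable lborel {a..<c} f" "a \<le> b" "b \<le> c"
  shows "(LINT s:{a..<c}|lborel. f s) = (LINT s:{a..<b}|lborel. f s) + (LINT s:{b..<c}|lborel. f s)"
proof -
  have "{a..<c} = {a..<b} \<union> {b..<c}" using assms(2,3) by auto
  then show ?thesis
    using assms by (simp only:) (rule set_integral_Un; auto intro: set_integrable_subset)
qed

lemma set_integral_inverse_one_minus:
  fixes u v :: real
  assumes "u \<le> v" "v < 1"
  shows "set_integrable lborel {u..<v} (\<lambda>s. 1 / (1 - s))"
    and "(LINT s:{u..<v}|lborel. 1 / (1 - s)) = ln (1 - u) - ln (1 - v)"
proof -
  have cont: "continuous_on {u..v} (\<lambda>s. 1 / (1 - s :: real))"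
    using assms by (intro continuous_intros) auto
  have closed: "set_integrable lborel {u..v} (\<lambda>s. 1 / (1 - s))"
    by (rule borel_integrable_atLeastAtMost'[OF cont])
  then show "set_integrable lborel {u..<v} (\<lambda>s. 1 / (1 - s))"
    by (rule set_integrable_subset) auto
  have "(LINT s:{u..<v}|lborel. 1 / (1 - s)) = (LINT s:{u..v}|lborel. 1 / (1 - s))"
    by (rule set_integral_discrete_difference[where X="{v}"]) auto
  also have "\<dots> = (- ln (1 - v)) - (- ln (1 - u))"
    unfolding set_lebesgue_integral_def
  proof (rule integral_FTC_atLeastAtMost[OF assms(1) _ cont])
    fix x assume "u \<le> x" "x \<le> v"
    then have "x < 1" using assms by simp
    then have "((\<lambda>s. - ln (1 - s)) has_real_derivative 1 / (1 - x)) (at x within {u..v})"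
      by (auto intro!: derivative_eq_intros simp: field_simps)
    then show "((\<lambda>s. - ln (1 - s)) has_vector_derivative 1 / (1 - x)) (at x within {u..v})"
      by (simp add: has_real_derivative_iff_has_vector_derivative)
  qed
  finally show "(LINT s:{u..<v}|lborel. 1 / (1 - s)) = ln (1 - u) - ln (1 - v)" by simp
qed

lemma ln_half_power: "ln ((1/2 :: real) ^ n) = - real n * ln 2"
  by (simp add: ln_realpow ln_div)

definition tail :: "nat \<Rightarrow> real" where "tail k = (1/2) ^ (k * k)"
definition mass :: "nat \<Rightarrow> real" where "mass k = tail k - tail (Suc k)"
definition expo :: "nat \<Rightarrow> nat" where "expo k = 4 ^ Suc k"
definition piece_start :: "nat \<Rightarrow> real" where "piece_start k = 1 - (1/2) ^ expo k"
definition piece_end :: "nat \<Rightarrow> real" where "piece_end k = 1 - (1/2) ^ Suc (expo k)"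
definition piece_width :: "nat \<Rightarrow> real" where "piece_width k = (1/2) ^ Suc (expo k)"

lemma tail_pos: "0 < tail k"
  by (simp add: tail_def)

lemma tail_eq_power_tail_Suc: "tail k = 2 ^ (2 * k + 1) * tail (Suc k)"
proof -
  have "Suc k * Suc k = k * k + (2 * k + 1)" by simp
  then have split: "tail (Suc k) = tail k * (1/2) ^ (2 * k + 1)"
    unfolding tail_def by (simp only: power_add)
  have "(2::real) ^ (2 * k + 1) * (1/2) ^ (2 * k + 1) = 1"
    by (simp add: power_mult_distrib[symmetric])
  moreover have "2 ^ (2 * k + 1) * tail (Suc k) = tail k * (2 ^ (2 * k + 1) * (1/2) ^ (2 * k + 1))"
    unfolding split by (simp only: mult_ac)
  ultimately show ?thesis by simp
qed

lemma mass_pos: "0 < mass k"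
proof -
  have "(2::real) \<le> 2 ^ (2 * k + 1)" using power_increasing[of 1 "2 * k + 1" "2::real"] by simp
  then have "0 < (2::real) ^ (2 * k + 1) - 1" by linarith
  moreover have "mass k = (2 ^ (2 * k + 1) - 1) * tail (Suc k)"
    unfolding mass_def by (subst tail_eq_power_tail_Suc[of k]) (simp add: left_diff_distrib)
  ultimately show ?thesis using tail_pos[of "Suc k"] by simp
qed

lemma tail_tendsto_zero: "tail \<longlonglongrightarrow> 0"
proof -
  have "(\<lambda>k. (1/2::real) ^ k) \<longlonglongrightarrow> 0" by (rule LIMSEQ_realpow_zero) auto
  moreover have "strict_mono (\<lambda>k::nat. k * k)" by (auto simp: strict_mono_def intro: mult_strict_mono)
  ultimately show ?thesis unfolding tail_def using LIMSEQ_subseq_LIMSEQ by (auto simp: o_def)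
qed

lemma mass_sums_tail: "(\<lambda>j. mass (j + k)) sums tail k"
proof -
  have "(\<lambda>j. tail (j + k)) \<longlonglongrightarrow> 0" using tail_tendsto_zero by (rule LIMSEQ_ignore_initial_segment)
  from telescope_sums'[OF this] show ?thesis by (simp add: mass_def)
qed

lemma summable_mass: "summable mass"
  using mass_sums_tail[of 0] by (simp add: sums_iff)

lemma piece_width_pos: "0 < piece_width k"
  by (simp add: piece_width_def)

lemma piece_end_minus_start: "piece_end k - piece_start k = piece_width k"
  by (simp add: piece_start_def piece_end_def piece_width_def)

lemma piece_start_less_end: "piece_start k < piece_end k"
  using piece_end_minus_start[of k] piece_width_pos[of k] by simp

lemma piece_start_nonneg: "0 \<le> piece_start k"
  by (simp add: piece_start_def power_le_one)

lemma piece_end_less_one: "piece_end k < 1"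
  by (simp add: piece_end_def)

lemma piece_end_midpoint: "(1 + piece_start k) / 2 = piece_end k"
  by (simp add: piece_start_def piece_end_def)

lemma piece_end_le_start: assumes "k < j" shows "piece_end k \<le> piece_start j"
proof -
  have "Suc (expo k) \<le> expo j"
    using assms unfolding expo_def by (simp add: Suc_le_eq power_strict_increasing)
  then have "(1/2::real) ^ expo j \<le> (1/2) ^ Suc (expo k)" by (rule power_decreasing) auto
  then show ?thesis unfolding piece_start_def piece_end_def by simp
qed

lemma piece_start_mono: "k \<le> j \<Longrightarrow> piece_start k \<le> piece_start j"
  using piece_end_le_start[of k j] piece_start_less_end[of k] by (cases "k = j") auto

lemma piece_end_mono: "k \<le> j \<Longrightarrow> piece_end k \<le> piece_end j"
  using piece_end_le_start[of k j] piece_start_less_end[of j] by (cases "k = j") auto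

lemma ex_piece_start_ge: assumes "r < 1" shows "\<exists>k. r \<le> piece_start k"
proof -
  obtain k where k: "(1/2::real) ^ k < 1 - r"
    using real_arch_pow_inv[of "1 - r" "1/2"] assms by auto
  have "k < 2 ^ k" by (rule less_exp)
  also have "(2::nat) ^ k \<le> 4 ^ k" by (simp add: power_mono)
  also have "(4::nat) ^ k \<le> expo k" unfolding expo_def by simp
  finally have "(1/2::real) ^ expo k \<le> (1/2) ^ k" by (intro power_decreasing) auto
  then show ?thesis using k unfolding piece_start_def by (intro exI[of _ k]) linarith
qed

lemma pieces_disjoint:
  "s \<in> {piece_start i..<piece_end i} \<Longrightarrow> s \<in> {piece_start j..<piece_end j} \<Longrightarrow> i = j"
  using piece_end_le_start[of i j] piece_end_le_start[of j i] by (cases i j rule: linorder_cases) auto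

lemma finite_pieces_containing: "finite {i. s \<in> {piece_start i..<piece_end i}}"
proof (cases "\<exists>i. s \<in> {piece_start i..<piece_end i}")
  case True
  then obtain i where "s \<in> {piece_start i..<piece_end i}" by blast
  then have "{i. s \<in> {piece_start i..<piece_end i}} \<subseteq> {i}" using pieces_disjoint by blast
  then show ?thesis by (rule finite_subset) simp
next
  case False
  then have "{i. s \<in> {piece_start i..<piece_end i}} = {}" by blast
  then show ?thesis by (metis finite.emptyI)
qed

lemma summable_over_pieces:
  "summable (\<lambda>i. f i * indicator {piece_start i..<piece_end i} s :: real)"
  by (rule summable_finite[OF finite_pieces_containing[of s]]) (simp add: indicator_def)

text \<open>\<open>ramp k r\<close> is the fraction of the \<open>k\<close>-th piece lying to the right of \<open>r\<close>.\<close>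

definition ramp :: "nat \<Rightarrow> real \<Rightarrow> real" where
  "ramp k r = max 0 (min 1 ((piece_end k - r) / piece_width k))"

definition step_hat :: "real \<Rightarrow> real" where
  "step_hat r = (\<Sum>k. mass k * ramp k r)"

lemma ramp_nonneg: "0 \<le> ramp k r"
  by (simp add: ramp_def)

lemma ramp_le_one: "ramp k r \<le> 1"
  by (simp add: ramp_def)

lemma ramp_eq_one: assumes "r \<le> piece_start k" shows "ramp k r = 1"
proof -
  have "piece_width k \<le> piece_end k - r" using assms piece_end_minus_start[of k] by simp
  then show ?thesis using piece_width_pos[of k] by (simp add: ramp_def)
qed

lemma ramp_eq_zero: assumes "piece_end k \<le> r" shows "ramp k r = 0"
proof -
  have "(piece_end k - r) / piece_width k \<le> 0"
    using assms piece_width_pos[of k] by (simp add: divide_nonpos_pos)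
  then show ?thesis by (simp add: ramp_def)
qed

lemma ramp_antimono: assumes "r \<le> r'" shows "ramp k r' \<le> ramp k r"
proof -
  have "(piece_end k - r') / piece_width k \<le> (piece_end k - r) / piece_width k"
    using assms piece_width_pos[of k] by (simp add: divide_right_mono)
  then show ?thesis by (simp add: ramp_def)
qed

lemma borel_measurable_ramp [measurable]: "ramp k \<in> borel_measurable borel"
  unfolding ramp_def using piece_width_pos[of k]
  by (intro borel_measurable_continuous_onI continuous_intros) auto

lemma summable_mass_ramp: "summable (\<lambda>k. mass k * ramp k r)"
proof (rule summable_comparison_test'[OF summable_mass, of 0])
  fix k
  show "norm (mass k * ramp k r) \<le> mass k"
    using mass_pos[of k] ramp_nonneg[of k r] ramp_le_one[of k r]
    by (simp add: mult_left_le_one_le)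
qed

lemma step_hat_nonneg: "0 \<le> step_hat r"
  unfolding step_hat_def
  by (rule suminf_nonneg[OF summable_mass_ramp]) (simp add: mass_pos less_imp_le ramp_nonneg)

lemma step_hat_antimono: "r \<le> r' \<Longrightarrow> step_hat r' \<le> step_hat r"
  unfolding step_hat_def
  by (rule suminf_le[OF _ summable_mass_ramp summable_mass_ramp])
    (simp add: mass_pos ramp_antimono mult_left_mono less_imp_le)

lemma step_hat_split:
  "step_hat r = (\<Sum>j. mass (j + k) * ramp (j + k) r) + (\<Sum>j<k. mass j * ramp j r)"
  unfolding step_hat_def by (rule suminf_split_initial_segment[OF summable_mass_ramp])

lemma step_hat_le_tail:
  assumes "\<forall>j<k. piece_end j \<le> r" shows "step_hat r \<le> tail k"
proof -
  have "(\<Sum>j<k. mass j * ramp j r) = 0" using assms ramp_eq_zero by simp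
  moreover have "(\<Sum>j. mass (j + k) * ramp (j + k) r) \<le> (\<Sum>j. mass (j + k))"
    using mass_pos ramp_le_one ramp_nonneg
      summable_ignore_initial_segment[OF summable_mass_ramp[of r], of k]
      summable_ignore_initial_segment[OF summable_mass, of k]
    by (intro suminf_le) (auto intro!: mult_left_le_one_le less_imp_le)
  ultimately show ?thesis using step_hat_split[of r k] mass_sums_tail[of k] by (simp add: sums_iff)
qed

lemma tail_le_step_hat:
  assumes "r \<le> piece_start k" shows "tail k \<le> step_hat r"
proof -
  have "(\<Sum>j<k. mass j * ramp j r) \<ge> 0"
    by (intro sum_nonneg) (simp add: mass_pos less_imp_le ramp_nonneg)
  moreover have "ramp (j + k) r = 1" for j
    using assms piece_start_mono[of k "j + k"] by (intro ramp_eq_one) simp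
  then have "(\<Sum>j. mass (j + k) * ramp (j + k) r) = tail k"
    using mass_sums_tail[of k] by (simp add: sums_iff)
  ultimately show ?thesis using step_hat_split[of r k] by simp
qed

lemma step_hat_pos: assumes "r < 1" shows "0 < step_hat r"
proof -
  obtain k where "r \<le> piece_start k" using ex_piece_start_ge[OF assms] by blast
  then show ?thesis using tail_le_step_hat tail_pos[of k] by (meson less_le_trans)
qed

definition step_weight :: "real \<Rightarrow> real" where
  "step_weight s = (\<Sum>k. (mass k / piece_width k) * indicator {piece_start k..<piece_end k} s)"

lemma integral_piece_right_of:
  fixes r :: real and k :: nat
  defines "g \<equiv> \<lambda>s. indicator {r..<1} s *\<^sub>R ((mass k / piece_width k) * indicator {piece_start k..<piece_end k} s)"
  shows "integrable lborel g" and "integral\<^sup>L lborel g = mass k * ramp k r"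
proof -
  let ?I = "{max r (piece_start k)..<piece_end k}"
  have g: "g = (\<lambda>s. (mass k / piece_width k) * indicator ?I s)"
    using piece_end_less_one[of k] by (auto simp: g_def indicator_def)
  have "emeasure lborel ?I < \<infinity>"
    by (cases "max r (piece_start k) \<le> piece_end k") auto
  then show "integrable lborel g"
    unfolding g by (intro integrable_mult_right integrable_real_indicator) simp_all
  have "integral\<^sup>L lborel g = (mass k / piece_width k) * measure lborel ?I"
    unfolding g by simp
  also have "\<dots> = mass k * ramp k r"
  proof (cases "r \<le> piece_start k")
    case True
    then show ?thesis
      using ramp_eq_one[OF True] piece_end_minus_start[of k] piece_start_less_end[of k]
        piece_width_pos[of k] by simp
  next
    case False
    show ?thesis
    proof (cases "r < piece_end k")
      case True
      have "(piece_end k - r) / piece_width k \<le> 1" "0 \<le> (piece_end k - r) / piece_width k"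
        using False True piece_end_minus_start[of k] piece_width_pos[of k] by simp_all
      then have "ramp k r = (piece_end k - r) / piece_width k" by (simp add: ramp_def)
      then show ?thesis using False True by simp
    next
      case False
      then show ?thesis using ramp_eq_zero[of k r] \<open>\<not> r \<le> piece_start k\<close> by simp
    qed
  qed
  finally show "integral\<^sup>L lborel g = mass k * ramp k r" .
qed

lemma step_weight_integral:
  shows "set_integrable lborel {r..<1} step_weight"
    and "(LINT s:{r..<1}|lborel. step_weight s) = step_hat r"
proof -
  let ?g = "\<lambda>k s. indicator {r..<1} s *\<^sub>R
    ((mass k / piece_width k) * indicator {piece_start k..<piece_end k} s)"
  have series: "(\<lambda>s. indicator {r..<1} s *\<^sub>R step_weight s) = (\<lambda>s. \<Sum>k. ?g k s)"
    unfolding step_weight_def real_scaleR_def by (rule ext, rule suminf_mult[OF summable_over_pieces, symmetric])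
  have summ: "AE s in lborel. summable (\<lambda>k. norm (?g k s))"
    by (rule AE_I2, rule summable_finite[OF finite_pieces_containing]) (auto simp: indicator_def)
  have norm: "\<And>k. (\<lambda>s. norm (?g k s)) = ?g k"
    using mass_pos piece_width_pos by (auto simp: indicator_def less_imp_le intro!: ext)
  have sums: "summable (\<lambda>k. \<integral>s. norm (?g k s) \<partial>lborel)"
    unfolding norm integral_piece_right_of(2) by (rule summable_mass_ramp)
  note int = integral_piece_right_of(1)
  show "set_integrable lborel {r..<1} step_weight"
    unfolding set_integrable_def series by (rule integrable_suminf[OF int summ sums])
  show "(LINT s:{r..<1}|lborel. step_weight s) = step_hat r"
    unfolding set_lebesgue_integral_def series integral_suminf[OF int summ sums]
      integral_piece_right_of(2) step_hat_def ..
qed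

lemma omega_hat_step_weight: "omega_hat step_weight = step_hat"
  unfolding omega_hat_def using step_weight_integral(2) by blast

lemma step_weight_nonneg: "0 \<le> step_weight s"
  unfolding step_weight_def
  by (rule suminf_nonneg[OF summable_over_pieces]) (simp add: mass_pos piece_width_pos less_imp_le)

lemma radial_weight_step_weight: "radial_weight step_weight"
  unfolding radial_weight_def omega_hat_step_weight
  using step_weight_nonneg step_weight_integral(1)[of 0] step_hat_pos by auto

lemma step_weight_not_in_D_hat: "step_weight \<notin> D_hat"
proof
  assume "step_weight \<in> D_hat"
  then obtain C where C: "C \<ge> 1" "\<forall>r\<in>{0..<1}. step_hat r \<le> C * step_hat ((1 + r) / 2)"
    by (auto simp: D_hat_def omega_hat_step_weight)
  obtain n where "C < 2 ^ n" using real_arch_pow[of 2 C] by auto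
  moreover have "(2::real) ^ n \<le> 2 ^ (2 * n + 1)" by (rule power_increasing) auto
  ultimately have "C * tail (Suc n) < tail n"
    using tail_eq_power_tail_Suc[of n] tail_pos[of "Suc n"] by simp
  moreover have "piece_start n \<in> {0..<1}"
    using piece_start_nonneg[of n] piece_start_less_end[of n] piece_end_less_one[of n] by simp
  then have "step_hat (piece_start n) \<le> C * step_hat (piece_end n)"
    using C(2) piece_end_midpoint[of n] by metis
  moreover have "tail n \<le> step_hat (piece_start n)" by (rule tail_le_step_hat) simp
  moreover have "step_hat (piece_end n) \<le> tail (Suc n)" by (rule step_hat_le_tail) (simp add: piece_end_mono)
  ultimately show False using C(1) by (smt (verit) mult_left_mono)
qed

lemma ln_one_minus_piece_end: "- ln (1 - piece_end k) = real (Suc (expo k)) * ln 2"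
  unfolding piece_end_def by (simp add: ln_realpow ln_div algebra_simps)

lemma tail_mult_expo_le: "tail k * real (Suc (expo k)) \<le> 128 * (1/2) ^ k"
proof -
  have "3 * k \<le> k * k + 4"
  proof (cases "3 \<le> k")
    case True
    then show ?thesis using mult_le_mono1[of 3 k k] by linarith
  next
    case False
    then have "k = 0 \<or> k = 1 \<or> k = 2" by auto
    then show ?thesis by auto
  qed
  then have "(1/2::real) ^ (k * k + 4) \<le> (1/2) ^ (3 * k)" by (rule power_decreasing) auto
  moreover have "(1/2::real) ^ (k * k + 4) = tail k / 16"
    by (simp add: tail_def power_add divide_simps)
  ultimately have tail_le: "tail k \<le> 16 * (1/2) ^ (3 * k)" by simp
  have "real (Suc (expo k)) = 4 * 4 ^ k + 1" by (simp add: expo_def)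
  then have expo_le: "real (Suc (expo k)) \<le> 8 * 4 ^ k" using one_le_power[of "4::real" k] by linarith
  have "tail k * real (Suc (expo k)) \<le> 16 * (1/2) ^ (3 * k) * (8 * 4 ^ k)"
    using tail_le expo_le tail_pos[of k] by (intro mult_mono) auto
  also have "\<dots> = 128 * ((1/2) ^ (3 * k) * 4 ^ k)" by simp
  also have "(1/2::real) ^ (3 * k) * 4 ^ k = (1/2) ^ k"
    by (simp add: power_add power_mult power_mult_distrib[symmetric] numeral_3_eq_3)
  finally show ?thesis .
qed

definition step_tilde :: "real \<Rightarrow> real" where
  "step_tilde s = step_hat s / (1 - s)"

lemma omega_tilde_step_weight: "omega_tilde step_weight = step_tilde"
  unfolding omega_tilde_def step_tilde_def omega_hat_step_weight ..

lemma step_tilde_nonneg: "s < 1 \<Longrightarrow> 0 \<le> step_tilde s"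
  unfolding step_tilde_def using step_hat_nonneg[of s] by simp

lemma ramp_over_one_minus_integral:
  shows "set_integrable lborel {0..<1} (\<lambda>s. ramp k s / (1 - s))"
    and "(LINT s:{0..<1}|lborel. ramp k s / (1 - s)) \<le> real (Suc (expo k)) * ln 2"
proof -
  let ?f = "\<lambda>s. indicator {0..<1} s *\<^sub>R (ramp k s / (1 - s))"
  let ?g = "\<lambda>s. indicator {0..<piece_end k} s *\<^sub>R (1 / (1 - s))"
  have end_nonneg: "0 \<le> piece_end k" using piece_start_nonneg[of k] piece_start_less_end[of k] by simp
  note log_integral = set_integral_inverse_one_minus[OF end_nonneg piece_end_less_one]
  have g: "integrable lborel ?g" using log_integral(1) by (simp add: set_integrable_def)
  have bound: "norm (?f s) \<le> ?g s" for s
  proof (cases "0 \<le> s \<and> s < piece_end k")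
    case True
    then show ?thesis using piece_end_less_one[of k] ramp_nonneg[of k s] ramp_le_one[of k s]
      by (simp add: divide_right_mono)
  next
    case False
    then have "s < 0 \<or> piece_end k \<le> s" by auto
    then show ?thesis using ramp_eq_zero[of k s] by (auto simp: indicator_def)
  qed
  have f: "integrable lborel ?f"
  proof (rule Bochner_Integration.integrable_bound[OF g])
    show "?f \<in> borel_measurable lborel" by measurable
    show "AE s in lborel. norm (?f s) \<le> norm (?g s)"
      by (rule AE_I2, rule order_trans[OF bound]) (simp only: real_norm_def abs_ge_self)
  qed
  then show "set_integrable lborel {0..<1} (\<lambda>s. ramp k s / (1 - s))"
    by (simp add: set_integrable_def)
  have "(LINT s:{0..<1}|lborel. ramp k s / (1 - s)) \<le> integral\<^sup>L lborel ?g"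
    unfolding set_lebesgue_integral_def
    by (rule integral_mono[OF f g]) (use bound in \<open>auto intro: order_trans[OF abs_ge_self]\<close>)
  also have "\<dots> = ln 1 - ln (1 - piece_end k)"
    using log_integral(2) by (simp add: set_lebesgue_integral_def)
  finally show "(LINT s:{0..<1}|lborel. ramp k s / (1 - s)) \<le> real (Suc (expo k)) * ln 2"
    using ln_one_minus_piece_end[of k] by simp
qed

lemma step_tilde_integrable: "set_integrable lborel {0..<1} step_tilde"
proof -
  let ?f = "\<lambda>k s. mass k * (indicator {0..<1} s *\<^sub>R (ramp k s / (1 - s)))"
  have f_eq: "?f k s = mass k * ramp k s * (indicator {0..<1} s / (1 - s))" for k s
    by simp
  have series: "(\<lambda>s. indicator {0..<1} s *\<^sub>R step_tilde s) = (\<lambda>s. \<Sum>k. ?f k s)"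
  proof
    fix s
    have "indicator {0..<1} s *\<^sub>R step_tilde s = step_hat s * (indicator {0..<1} s / (1 - s))"
      by (simp add: step_tilde_def)
    also have "\<dots> = (\<Sum>k. mass k * ramp k s * (indicator {0..<1} s / (1 - s)))"
      unfolding step_hat_def by (rule suminf_mult2[OF summable_mass_ramp])
    finally show "indicator {0..<1} s *\<^sub>R step_tilde s = (\<Sum>k. ?f k s)"
      by (simp only: f_eq)
  qed
  have int: "integrable lborel (?f k)" for k
    using ramp_over_one_minus_integral(1)[of k] unfolding set_integrable_def
    by (rule integrable_mult_right)
  have norm_eq: "norm (?f k s) = ?f k s" for k s
    using mass_pos[of k] ramp_nonneg[of k s] by (simp add: indicator_def)
  have summ: "AE s in lborel. summable (\<lambda>k. norm (?f k s))"
  proof (rule AE_I2)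
    fix s
    have "summable (\<lambda>k. ?f k s)"
      unfolding f_eq by (rule summable_mult2[OF summable_mass_ramp])
    then show "summable (\<lambda>k. norm (?f k s))" by (simp only: norm_eq)
  qed
  have integral_le: "(\<integral>s. norm (?f k s) \<partial>lborel) \<le> 128 * ln 2 * (1/2) ^ k" for k
  proof -
    have "(\<integral>s. norm (?f k s) \<partial>lborel) = mass k * (LINT s:{0..<1}|lborel. ramp k s / (1 - s))"
      by (simp only: norm_eq set_lebesgue_integral_def integral_mult_right_zero)
    also have "\<dots> \<le> tail k * (real (Suc (expo k)) * ln 2)"
    proof (rule mult_mono[OF _ ramp_over_one_minus_integral(2)])
      show "mass k \<le> tail k" using tail_pos[of "Suc k"] by (simp add: mass_def)
      show "0 \<le> tail k" using tail_pos[of k] by simp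
      show "0 \<le> (LINT s:{0..<1}|lborel. ramp k s / (1 - s))"
        by (rule set_integral_nonneg_real) (simp add: ramp_nonneg)
    qed
    also have "\<dots> \<le> 128 * (1/2) ^ k * ln 2"
      unfolding mult.assoc[symmetric] by (rule mult_right_mono[OF tail_mult_expo_le]) simp
    finally show ?thesis by (simp only: mult_ac)
  qed
  have sums: "summable (\<lambda>k. \<integral>s. norm (?f k s) \<partial>lborel)"
  proof (rule summable_comparison_test'[where g="\<lambda>k. 128 * ln 2 * (1/2) ^ k" and N=0])
    show "summable (\<lambda>k. 128 * ln 2 * (1/2::real) ^ k)"
      by (intro summable_mult summable_geometric) simp
    show "norm (\<integral>s. norm (?f k s) \<partial>lborel) \<le> 128 * ln 2 * (1/2) ^ k" for k
      using integral_le[of k] integral_nonneg_AE[of "\<lambda>s. norm (?f k s)" lborel]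
      by (simp only: real_norm_def abs_of_nonneg AE_I2 norm_ge_zero)
  qed
  show ?thesis
    unfolding set_integrable_def series by (rule integrable_suminf[OF int summ sums])
qed

lemma set_integrable_step_tilde:
  "A \<subseteq> {0..<1} \<Longrightarrow> A \<in> sets lborel \<Longrightarrow> set_integrable lborel A step_tilde"
  by (rule set_integrable_subset[OF step_tilde_integrable])

lemma step_tilde_integral_first_half_le:
  assumes "0 \<le> r" "r < 1"
  shows "(LINT s:{r..<(1 + r) / 2}|lborel. step_tilde s) \<le> step_hat r * ln 2"
proof -
  let ?q = "(1 + r) / 2"
  have q: "r \<le> ?q" "?q < 1" using assms by auto
  have "(LINT s:{r..<?q}|lborel. step_tilde s) \<le> (LINT s:{r..<?q}|lborel. step_hat r * (1 / (1 - s)))"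
  proof (rule set_integral_mono)
    show "set_integrable lborel {r..<?q} step_tilde"
      by (rule set_integrable_step_tilde) (use assms q in auto)
    show "set_integrable lborel {r..<?q} (\<lambda>s. step_hat r * (1 / (1 - s)))"
      by (rule set_integrable_mult_right, rule set_integral_inverse_one_minus(1)[OF q])
    show "step_tilde s \<le> step_hat r * (1 / (1 - s))" if "s \<in> {r..<?q}" for s
      using that q step_hat_antimono[of r s] by (simp add: step_tilde_def divide_right_mono)
  qed
  also have "\<dots> = step_hat r * (LINT s:{r..<?q}|lborel. 1 / (1 - s))"
    by (rule set_integral_mult_right)
  also have "\<dots> = step_hat r * (ln (1 - r) - ln (1 - ?q))"
    by (simp only: set_integral_inverse_one_minus(2)[OF q])
  also have "ln (1 - r) - ln (1 - ?q) = ln 2"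
  proof -
    have halve: "1 - r = 2 * (1 - ?q)" by (simp add: field_simps)
    have "ln (1 - r) = ln 2 + ln (1 - ?q)" unfolding halve using q by (intro ln_mult_pos) auto
    then show ?thesis by simp
  qed
  finally show ?thesis .
qed

lemma tail_ln_le_step_tilde_integral:
  assumes "0 \<le> q" "q \<le> piece_start j"
  shows "tail j * (ln (1 - q) - ln (1 - piece_start j))
    \<le> (LINT s:{q..<piece_start j}|lborel. step_tilde s)"
proof -
  have A: "piece_start j < 1" using piece_start_less_end[of j] piece_end_less_one[of j] by simp
  have "tail j * (ln (1 - q) - ln (1 - piece_start j))
      = tail j * (LINT s:{q..<piece_start j}|lborel. 1 / (1 - s))"
    by (simp only: set_integral_inverse_one_minus(2)[OF assms(2) A])
  also have "\<dots> = (LINT s:{q..<piece_start j}|lborel. tail j * (1 / (1 - s)))"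
    by (rule set_integral_mult_right[symmetric])
  also have "\<dots> \<le> (LINT s:{q..<piece_start j}|lborel. step_tilde s)"
  proof (rule set_integral_mono)
    show "set_integrable lborel {q..<piece_start j} step_tilde"
      by (rule set_integrable_step_tilde) (use assms A in auto)
    show "set_integrable lborel {q..<piece_start j} (\<lambda>s. tail j * (1 / (1 - s)))"
      by (rule set_integrable_mult_right, rule set_integral_inverse_one_minus(1)[OF assms(2) A])
    show "tail j * (1 / (1 - s)) \<le> step_tilde s" if "s \<in> {q..<piece_start j}" for s
      using that A tail_le_step_hat[of s j] by (simp add: step_tilde_def divide_right_mono)
  qed
  finally show ?thesis .
qed

lemma ln_plateau_length:
  assumes "(1/2) ^ Suc (Suc (expo k)) < 1 - q"
  shows "2 ^ (2 * k + 1) * ln 2 \<le> ln (1 - q) - ln (1 - piece_start (Suc k))"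
proof -
  have "ln ((1/2) ^ Suc (Suc (expo k))) \<le> ln (1 - q)"
    by (rule ln_mono[OF less_imp_le[OF assms]]) simp
  then have "- real (Suc (Suc (expo k))) * ln 2 \<le> ln (1 - q)"
    unfolding ln_half_power .
  moreover have "ln (1 - piece_start (Suc k)) = - real (4 * expo k) * ln 2"
    by (simp add: piece_start_def expo_def ln_half_power)
  moreover have "(2::real) ^ (2 * k + 1) \<le> 3 * real (expo k) - 2"
  proof -
    have "(2::real) ^ (2 * k + 1) = 2 * 4 ^ k" by (simp add: power_mult)
    moreover have "real (expo k) = 4 * 4 ^ k" by (simp add: expo_def)
    ultimately show ?thesis using one_le_power[of "4::real" k] by linarith
  qed
  then have "2 ^ (2 * k + 1) * ln 2 \<le> (3 * real (expo k) - 2) * ln 2" by (rule mult_right_mono) simp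
  ultimately show ?thesis by (simp add: algebra_simps)
qed

lemma step_tilde_doubling:
  assumes "0 \<le> r" "r < 1"
  shows "(LINT s:{r..<1}|lborel. step_tilde s) \<le> 2 * (LINT s:{(1 + r) / 2..<1}|lborel. step_tilde s)"
    and "0 < (LINT s:{r..<1}|lborel. step_tilde s)"
proof -
  define q where "q = (1 + r) / 2"
  have ex: "\<exists>k. r < piece_end k"
    using ex_piece_start_ge[OF assms(2)] piece_start_less_end by (meson order_le_less_trans)
  define k where "k = (LEAST k. r < piece_end k)"
  have r_k: "r < piece_end k" unfolding k_def by (rule LeastI_ex[OF ex])
  have past_earlier: "\<forall>j<k. piece_end j \<le> r" unfolding k_def using not_less_Least by (metis not_less)
  define A where "A = piece_start (Suc k)"
  have q: "0 \<le> q" "r \<le> q" "q < 1" using assms unfolding q_def by auto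
  have A: "A < 1" using piece_start_less_end[of "Suc k"] piece_end_less_one[of "Suc k"] by (simp add: A_def)
  have "(1/2) ^ Suc (Suc (expo k)) < 1 - q"
    using r_k unfolding q_def piece_end_def by (simp add: field_simps)
  from ln_plateau_length[OF this] have plateau: "2 ^ (2 * k + 1) * ln 2 \<le> ln (1 - q) - ln (1 - A)"
    unfolding A_def .
  moreover have "0 < (2::real) ^ (2 * k + 1) * ln 2" by simp
  ultimately have "ln (1 - A) < ln (1 - q)" by linarith
  then have qA: "q \<le> A" using q A by simp
  have "(LINT s:{r..<q}|lborel. step_tilde s) \<le> step_hat r * ln 2"
    unfolding q_def by (rule step_tilde_integral_first_half_le[OF assms])
  also have "\<dots> \<le> tail k * ln 2"
    using step_hat_le_tail[OF past_earlier] by (simp add: mult_right_mono)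
  also have "\<dots> = tail (Suc k) * (2 ^ (2 * k + 1) * ln 2)"
    by (subst tail_eq_power_tail_Suc) simp
  also have "\<dots> \<le> tail (Suc k) * (ln (1 - q) - ln (1 - A))"
    using plateau tail_pos[of "Suc k"] by (simp add: mult_left_mono)
  finally have first_half: "(LINT s:{r..<q}|lborel. step_tilde s) \<le> tail (Suc k) * (ln (1 - q) - ln (1 - A))" .
  have plateau_integral: "tail (Suc k) * (ln (1 - q) - ln (1 - A)) \<le> (LINT s:{q..<A}|lborel. step_tilde s)"
    unfolding A_def by (rule tail_ln_le_step_tilde_integral[OF q(1) qA[unfolded A_def]])
  have plateau_pos: "0 < tail (Suc k) * (ln (1 - q) - ln (1 - A))"
    using \<open>ln (1 - A) < ln (1 - q)\<close> tail_pos[of "Suc k"] by simp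
  have int_r: "set_integrable lborel {r..<1} step_tilde" by (rule set_integrable_step_tilde) (use assms in auto)
  have int_q: "set_integrable lborel {q..<1} step_tilde" by (rule set_integrable_step_tilde) (use q in auto)
  have split_r: "(LINT s:{r..<1}|lborel. step_tilde s)
      = (LINT s:{r..<q}|lborel. step_tilde s) + (LINT s:{q..<1}|lborel. step_tilde s)"
    by (rule set_integral_atLeastLessThan_split[OF int_r]) (use q in auto)
  have split_q: "(LINT s:{q..<1}|lborel. step_tilde s)
      = (LINT s:{q..<A}|lborel. step_tilde s) + (LINT s:{A..<1}|lborel. step_tilde s)"
    by (rule set_integral_atLeastLessThan_split[OF int_q qA]) (use A in auto)
  have "0 \<le> (LINT s:{r..<q}|lborel. step_tilde s)" "0 \<le> (LINT s:{A..<1}|lborel. step_tilde s)"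
    using q A by (auto intro!: set_integral_nonneg_real step_tilde_nonneg)
  then show "(LINT s:{r..<1}|lborel. step_tilde s) \<le> 2 * (LINT s:{(1 + r) / 2..<1}|lborel. step_tilde s)"
    and "0 < (LINT s:{r..<1}|lborel. step_tilde s)"
    using split_r split_q first_half plateau_integral plateau_pos unfolding q_def by linarith+
qed

lemma radial_weight_step_tilde: "radial_weight step_tilde"
  unfolding radial_weight_def omega_hat_def
  using step_tilde_nonneg step_tilde_integrable step_tilde_doubling(2) by auto

lemma step_tilde_in_D_hat: "step_tilde \<in> D_hat"
  unfolding D_hat_def omega_hat_def
  using radial_weight_step_tilde step_tilde_doubling(1) by (auto intro!: exI[of _ 2])

theorem theorem3:
  shows "\<exists>\<omega>. radial_weight \<omega> \<and> \<omega> \<notin> D_hat \<and>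
           radial_weight (omega_tilde \<omega>) \<and> omega_tilde \<omega> \<in> D_hat"
  using radial_weight_step_weight step_weight_not_in_D_hat radial_weight_step_tilde step_tilde_in_D_hat
  unfolding omega_tilde_step_weight[symmetric] by blast

end
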